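(* Let $A$ be a central simple algebra of degree $n$ over a field $k$, let $r>1$ and $1\leqslant i_1<\cdots<i_r\leqslant n$ be integers, and let $I_r\subset A$ be a left ideal of $k$-dimension $ni_r$. Let $B=I_r/I_r^\circ I_r$. For a left ideal $I_j\subset I_r$, the kernel of $I_j\to I_r/I_r^\circ I_r$ is $I_r^\circ I_j$, so $I_j/I_r^\circ I_j$ is identified with its image in $B$. Then the map $$(I_1,\ldots,I_{r-1})\mapsto(I_j/I_r^\circ I_j)_{j=1,\ldots,r-1}$$ is a canonical bijection from the set of tuples of left ideals $I_1\subset\cdots\subset I_{r-1}\subset I_r$ of $A$ with $\dim_k I_j=ni_j$ onto the set of tuples $J_1\subset\cdots\subset J_{r-1}$ of left ideals of $B$ with $\dim_k J_j=i_ji_r$.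
   Context: $I^\circ=\{a\in A: Ia=0\}$ is the right annihilator; $UW$ denotes the $k$-span of products $uw$. $I_r^\circ I_r$ is a two-sided ideal of the ring $I_r$ (since $I_rI_r^\circ=0$), so $I_r/I_r^\circ I_r$ is a ring; it is a central simple $k$-algebra of degree $i_r$, isomorphic to $\mathrm{End}_A(I_r)$. *)

theory Defs
  imports Main "HOL.Vector_Spaces" "HOL-Library.FuncSet"
begin

definition k_algebra :: "('k::field \<Rightarrow> 'a::ring_1 \<Rightarrow> 'a) \<Rightarrow> bool" where
  "k_algebra scale \<longleftrightarrow> vector_space scale \<and>
     (\<forall>c x y. scale c (x * y) = scale c x * y \<and> scale c (x * y) = x * scale c y)"

definition left_ideal :: "('k::field \<Rightarrow> 'a::ring_1 \<Rightarrow> 'a) \<Rightarrow> 'a set \<Rightarrow> bool" where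
  "left_ideal scale I \<longleftrightarrow> module.subspace scale I \<and> (\<forall>a. \<forall>x\<in>I. a * x \<in> I)"

definition two_sided_ideal :: "('k::field \<Rightarrow> 'a::ring_1 \<Rightarrow> 'a) \<Rightarrow> 'a set \<Rightarrow> bool" where
  "two_sided_ideal scale I \<longleftrightarrow> module.subspace scale I \<and>
     (\<forall>a. \<forall>x\<in>I. a * x \<in> I \<and> x * a \<in> I)"

definition central_simple_algebra :: "('k::field \<Rightarrow> 'a::ring_1 \<Rightarrow> 'a) \<Rightarrow> nat \<Rightarrow> bool" where
  "central_simple_algebra scale n \<longleftrightarrow> k_algebra scale \<and>
     (\<exists>Bs. finite_dimensional_vector_space scale Bs) \<and>
     (0::'a) \<noteq> 1 \<and>
     {z. \<forall>x. z * x = x * z} = {scale c 1 | c. True} \<and>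
     (\<forall>I. two_sided_ideal scale I \<longrightarrow> I = {0} \<or> I = UNIV) \<and>
     vector_space.dim scale (UNIV :: 'a set) = n ^ 2"

definition right_annihilator :: "'a::ring_1 set \<Rightarrow> 'a set" where
  "right_annihilator I = {a. \<forall>x\<in>I. x * a = 0}"

definition prod_span :: "('k::field \<Rightarrow> 'a::ring_1 \<Rightarrow> 'a) \<Rightarrow> 'a set \<Rightarrow> 'a set \<Rightarrow> 'a set" where
  "prod_span scale U W = module.span scale {u * w | u w. u \<in> U \<and> w \<in> W}"

text \<open>\<pi> : Ir \<rightarrow> B presents B as the k-algebra quotient Ir / N:
a surjective k-linear multiplicative map on Ir with kernel exactly N.\<close>
definition is_quotient_map ::
  "('k::field \<Rightarrow> 'a::ring_1 \<Rightarrow> 'a) \<Rightarrow> ('k \<Rightarrow> 'b::ring_1 \<Rightarrow> 'b) \<Rightarrow> 'a set \<Rightarrow> 'a set \<Rightarrow> ('a \<Rightarrow> 'b) \<Rightarrow> bool" where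
  "is_quotient_map sA sB Ir N \<pi> \<longleftrightarrow>
     (\<forall>x\<in>Ir. \<forall>y\<in>Ir. \<pi> (x + y) = \<pi> x + \<pi> y \<and> \<pi> (x * y) = \<pi> x * \<pi> y) \<and>
     (\<forall>c. \<forall>x\<in>Ir. \<pi> (sA c x) = sB c (\<pi> x)) \<and>
     \<pi> ` Ir = UNIV \<and>
     {x\<in>Ir. \<pi> x = 0} = N"

end

theory Submission
  imports Defs
begin

text \<open>Every left ideal of a finite-dimensional simple algebra \<open>A\<close> has the form \<open>Af\<close> with
  \<open>f\<close> idempotent; write \<open>I\<^sub>r = Ae\<^sub>r\<close>. For \<open>x, y \<in> I\<^sub>r\<close> one has \<open>\<pi>(x) = \<pi>(y)\<close> iff
  \<open>e\<^sub>rx = e\<^sub>ry\<close>, because \<open>1 - e\<^sub>r\<close> lies in \<open>I\<^sub>r\<^sup>\<circ>\<close> while \<open>e\<^sub>r\<close> kills \<open>I\<^sub>r\<^sup>\<circ>\<close> from the left.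
  Using simplicity, a left ideal \<open>L \<subseteq> I\<^sub>r\<close> is therefore recovered from its image as
  \<open>{y \<in> I\<^sub>r. \<forall>a. \<pi>(ay) \<in> \<pi>(L)}\<close>, and this pullback construction inverts \<open>L \<mapsto> \<pi>(L)\<close>: the
  left ideals of \<open>A\<close> inside \<open>I\<^sub>r\<close> correspond, preserving inclusion, to the left ideals of \<open>B\<close>.

  For dimensions, \<open>\<pi>(Af) \<cong> e\<^sub>rAf\<close>, and \<open>dim (eAf) \<cdot> dim A = dim (Ae) \<cdot> dim (Af)\<close> for idempotents
  \<open>e, f\<close>: decompose \<open>e\<close> and \<open>f\<close> into orthogonal primitive idempotents and use that any two
  primitive idempotents \<open>p, q\<close> are equivalent, so that all \<open>pAq\<close> have the same dimension. Hence
  \<open>dim \<pi>(L) \<cdot> n\<^sup>2 = n i\<^sub>r \<cdot> dim L\<close>, which turns \<open>dim L = n i\<^sub>j\<close> into \<open>dim \<pi>(L) = i\<^sub>j i\<^sub>r\<close>,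
  and the bijection on chains is the pointwise one.\<close>

section \<open>Peirce spaces in a finite-dimensional simple algebra\<close>

definition peirce :: "'a::ring_1 \<Rightarrow> 'a \<Rightarrow> 'a set" where
  "peirce e f = range (\<lambda>a. e * a * f)"

lemma mem_peirce_iff:
  assumes "e * e = e" "f * f = f"
  shows "x \<in> peirce e f \<longleftrightarrow> e * x = x \<and> x * f = x"
  unfolding peirce_def using assms
  by (auto simp: mult.assoc[symmetric] intro!: image_eqI[of _ _ x]) (metis mult.assoc)+

lemma mem_peirce_one_iff: "f * f = f \<Longrightarrow> x \<in> peirce 1 f \<longleftrightarrow> x * f = x"
  using mem_peirce_iff[of 1 f x] by simp

lemma self_mem_peirce_one: "f \<in> peirce 1 f"
  unfolding peirce_def by (auto intro: image_eqI[of _ _ 1])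

lemma peirce_zero_right [simp]: "peirce e 0 = {0}"
  and peirce_zero_left [simp]: "peirce 0 f = {0}"
  and peirce_one_one: "peirce 1 1 = UNIV"
  by (auto simp: peirce_def intro!: image_eqI)

locale fd_simple_algebra = finite_dimensional_vector_space scale Bs
  for scale :: "'k::field \<Rightarrow> 'a::ring_1 \<Rightarrow> 'a" and Bs :: "'a set" +
  assumes scale_mult_left: "\<And>c x y. scale c (x * y) = scale c x * y"
    and scale_mult_right: "\<And>c x y. scale c (x * y) = x * scale c y"
    and simple: "\<And>I. two_sided_ideal scale I \<Longrightarrow> I = {0} \<or> I = UNIV"
begin

definition minimal_left_ideal :: "'a set \<Rightarrow> bool" where
  "minimal_left_ideal M \<longleftrightarrow> left_ideal scale M \<and> M \<noteq> {0} \<and>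
     (\<forall>L. left_ideal scale L \<and> L \<subseteq> M \<longrightarrow> L = {0} \<or> L = M)"

definition primitive_idempotent :: "'a \<Rightarrow> bool" where
  "primitive_idempotent q \<longleftrightarrow> q * q = q \<and> minimal_left_ideal (peirce 1 q)"

lemma left_ideal_subspace: "left_ideal scale L \<Longrightarrow> subspace L"
  and left_ideal_mult: "left_ideal scale L \<Longrightarrow> x \<in> L \<Longrightarrow> a * x \<in> L"
  and left_ideal_0: "left_ideal scale L \<Longrightarrow> 0 \<in> L"
  and left_ideal_add: "left_ideal scale L \<Longrightarrow> x \<in> L \<Longrightarrow> y \<in> L \<Longrightarrow> x + y \<in> L"
  and left_ideal_diff: "left_ideal scale L \<Longrightarrow> x \<in> L \<Longrightarrow> y \<in> L \<Longrightarrow> x - y \<in> L"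
  and left_ideal_scale: "left_ideal scale L \<Longrightarrow> x \<in> L \<Longrightarrow> scale c x \<in> L"
  by (simp_all add: left_ideal_def subspace_0 subspace_add subspace_diff subspace_scale)

lemma left_idealI:
  assumes "0 \<in> L" "\<And>x y. x \<in> L \<Longrightarrow> y \<in> L \<Longrightarrow> x + y \<in> L"
    "\<And>c x. x \<in> L \<Longrightarrow> scale c x \<in> L" "\<And>a x. x \<in> L \<Longrightarrow> a * x \<in> L"
  shows "left_ideal scale L"
  using assms by (auto simp: left_ideal_def subspace_def)

lemma subspace_peirce: "subspace (peirce e f)"
proof (rule subspaceI)
  show "0 \<in> peirce e f" unfolding peirce_def by (auto intro!: image_eqI[of _ _ 0])
  fix x y assume "x \<in> peirce e f" "y \<in> peirce e f"
  then obtain a b where "x = e * a * f" "y = e * b * f" by (auto simp: peirce_def)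
  then show "x + y \<in> peirce e f" unfolding peirce_def
    by (auto intro!: image_eqI[of _ _ "a + b"] simp: algebra_simps)
next
  fix c x assume "x \<in> peirce e f"
  then obtain a where "x = e * a * f" by (auto simp: peirce_def)
  then have "scale c x = e * scale c a * f" by (metis scale_mult_left scale_mult_right mult.assoc)
  then show "scale c x \<in> peirce e f" by (auto simp: peirce_def)
qed

lemma left_ideal_peirce: "left_ideal scale (peirce 1 f)"
proof -
  have "b * x \<in> peirce 1 f" if "x \<in> peirce 1 f" for b x
    using that by (auto simp: peirce_def mult.assoc[symmetric])
  with subspace_peirce show ?thesis by (auto simp: left_ideal_def)
qed

lemma dim_pos_if_nonzero_mem: "x \<in> S \<Longrightarrow> x \<noteq> 0 \<Longrightarrow> 0 < dim S"
  by (metis dim_eq_0 neq0_conv singletonD subsetD)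

lemma dim_UNIV_pos: "0 < dim (UNIV :: 'a set)"
  using dim_pos_if_nonzero_mem[of 1 UNIV] by simp

lemma dim_less_if_psubset:
  assumes "subspace S" "subspace T" "S \<subset> T"
  shows "dim S < dim T"
  using assms dim_psubset span_eq_iff by metis

lemma exists_minimal_left_ideal:
  assumes "left_ideal scale L" "L \<noteq> {0}"
  shows "\<exists>M. minimal_left_ideal M \<and> M \<subseteq> L"
  using assms
proof (induction "dim L" arbitrary: L rule: less_induct)
  case less
  show ?case
  proof (cases "minimal_left_ideal L")
    case False
    then obtain L' where L': "left_ideal scale L'" "L' \<subset> L" "L' \<noteq> {0}"
      using less.prems by (auto simp: minimal_left_ideal_def)
    have "dim L' < dim L"
      using L' less.prems by (intro dim_less_if_psubset) (auto simp: left_ideal_subspace)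
    with less.hyps[OF this L'(1,3)] L'(2) show ?thesis by blast
  qed auto
qed

lemma left_ideal_right_mult_image:
  assumes "left_ideal scale L"
  shows "left_ideal scale ((\<lambda>y. y * x) ` L)"
proof (rule left_idealI)
  show "0 \<in> (\<lambda>y. y * x) ` L" using left_ideal_0[OF assms] by (auto intro!: image_eqI[of _ _ 0])
qed (use left_ideal_add[OF assms] left_ideal_scale[OF assms] left_ideal_mult[OF assms] in
     \<open>auto simp: distrib_right[symmetric] scale_mult_left mult.assoc[symmetric]\<close>)

lemma left_ideal_right_annihilated:
  assumes "left_ideal scale L"
  shows "left_ideal scale {y \<in> L. y * x = 0}"
  by (rule left_idealI)
    (use left_ideal_0[OF assms] left_ideal_add[OF assms] left_ideal_scale[OF assms]
       left_ideal_mult[OF assms] in \<open>auto simp: distrib_right scale_mult_left[symmetric] mult.assoc\<close>)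

text \<open>The simplicity of the algebra enters only through this lemma: the elements \<open>z\<close>
  with \<open>zAy \<subseteq> L\<close> form a two-sided ideal.\<close>

lemma mem_left_ideal_if_sandwiched:
  assumes L: "left_ideal scale L" and "e \<noteq> 0" and e: "\<And>a. e * a * y \<in> L"
  shows "y \<in> L"
proof -
  let ?T = "{z. \<forall>a. z * a * y \<in> L}"
  have "two_sided_ideal scale ?T"
    unfolding two_sided_ideal_def subspace_def
  proof (intro conjI ballI allI)
    show "0 \<in> ?T" using left_ideal_0[OF L] by simp
    fix x z assume "x \<in> ?T" "z \<in> ?T"
    then show "x + z \<in> ?T" using left_ideal_add[OF L] by (simp add: distrib_right)
  next
    fix c x assume "x \<in> ?T"
    then show "scale c x \<in> ?T" using left_ideal_scale[OF L] by (simp add: scale_mult_left[symmetric])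
  next
    fix b x assume x: "x \<in> ?T"
    then show "b * x \<in> ?T" using left_ideal_mult[OF L] by (simp add: mult.assoc)
    have "x * b * a * y = x * (b * a) * y" for a by (simp add: mult.assoc)
    with x show "x * b \<in> ?T" by simp
  qed
  moreover have "e \<in> ?T" using e by blast
  ultimately have "1 \<in> ?T" using simple \<open>e \<noteq> 0\<close> by blast
  then have "1 * 1 * y \<in> L" by blast
  then show ?thesis by simp
qed

lemma sandwich_nonzero:
  fixes x y :: 'a
  assumes "x \<noteq> 0" "y \<noteq> 0"
  shows "\<exists>a. x * a * y \<noteq> 0"
proof -
  have "left_ideal scale {0}" by (rule left_idealI) auto
  then show ?thesis using assms mem_left_ideal_if_sandwiched[of "{0}" x y] by blast
qed

lemma minimal_left_ideal_eq_peirce: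
  assumes M: "minimal_left_ideal M"
  shows "\<exists>g. g * g = g \<and> g \<noteq> 0 \<and> M = peirce 1 g"
proof -
  have Mli: "left_ideal scale M"
    and Mmin: "\<And>L. left_ideal scale L \<Longrightarrow> L \<subseteq> M \<Longrightarrow> L \<noteq> {0} \<Longrightarrow> L = M"
    using M by (auto simp: minimal_left_ideal_def)
  obtain m where m: "m \<in> M" "m \<noteq> 0"
    using M left_ideal_0[OF Mli] by (auto simp: minimal_left_ideal_def)
  then obtain a where "m * (a * m) \<noteq> 0" using sandwich_nonzero by (metis mult.assoc)
  moreover define x where "x = a * m"
  ultimately have x: "x \<in> M" "m * x \<noteq> 0" using left_ideal_mult[OF Mli m(1)] by auto
  have "(\<lambda>y. y * x) ` M = M"
    using x m left_ideal_mult[OF Mli] by (intro Mmin left_ideal_right_mult_image Mli) auto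
  then obtain g where g: "g \<in> M" "g * x = x" using x(1) by (metis imageE)
  have "{y \<in> M. y * x = 0} \<noteq> M"
  proof
    assume "{y \<in> M. y * x = 0} = M"
    then have "g * x = 0" using g(1) by blast
    with g x show False by simp
  qed
  then have K0: "{y \<in> M. y * x = 0} = {0}"
    using Mmin left_ideal_right_annihilated[OF Mli] by blast
  have "g * g - g \<in> {y \<in> M. y * x = 0}"
    using g left_ideal_diff[OF Mli] left_ideal_mult[OF Mli] by (auto simp: algebra_simps)
  then have gg: "g * g = g" using K0 by auto
  have g0: "g \<noteq> 0" using g x by auto
  have "peirce 1 g = M"
  proof (rule Mmin[OF left_ideal_peirce])
    show "peirce 1 g \<subseteq> M" using left_ideal_mult[OF Mli g(1)] by (auto simp: peirce_def)
    show "peirce 1 g \<noteq> {0}" using g0 self_mem_peirce_one by blast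
  qed
  with gg g0 show ?thesis by auto
qed

lemma exists_idempotent_peirce_psubset:
  assumes L: "left_ideal scale L" and f: "f * f = f" "f \<in> L" and x: "x \<in> L" "x \<notin> peirce 1 f"
  shows "\<exists>h. h * h = h \<and> h \<in> L \<and> peirce 1 f \<subset> peirce 1 h"
proof -
  have "x - x * f \<in> {y \<in> L. y * f = 0}"
    using x left_ideal_diff[OF L] left_ideal_mult[OF L f(2)] by (auto simp: algebra_simps f(1))
  moreover have "x - x * f \<noteq> 0" using x(2) mem_peirce_one_iff[OF f(1)] by auto
  ultimately obtain M where M: "minimal_left_ideal M" "M \<subseteq> {y \<in> L. y * f = 0}"
    using exists_minimal_left_ideal[OF left_ideal_right_annihilated[OF L]] by blast
  then obtain g where g: "g * g = g" "g \<noteq> 0" "M = peirce 1 g"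
    using minimal_left_ideal_eq_peirce by blast
  have "g \<in> M" using g(3) self_mem_peirce_one by simp
  then have gL: "g \<in> L" and gf: "g * f = 0" using M by auto
  \<comment> \<open>\<open>f + g\<close> need not be idempotent as \<open>fg\<close> may be nonzero; \<open>h\<close> is, and still satisfies \<open>fh = f\<close>, \<open>gh = g\<close>.\<close>
  define h where "h = f + g - f * g"
  have gf': "g * (f * z) = 0" for z using gf by (simp add: mult.assoc[symmetric])
  have ff': "f * (f * z) = f * z" for z using f(1) by (simp add: mult.assoc[symmetric])
  have gg': "g * (g * z) = g * z" for z using g(1) by (simp add: mult.assoc[symmetric])
  have hh: "h * h = h" unfolding h_def by (simp add: algebra_simps f(1) g(1) gf gf' ff' gg')
  have "h \<in> L"
    unfolding h_def using f(2) gL left_ideal_add[OF L] left_ideal_diff[OF L] left_ideal_mult[OF L gL]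
    by auto
  moreover have "peirce 1 f \<subseteq> peirce 1 h"
  proof
    fix y assume "y \<in> peirce 1 f"
    then have yf: "y * f = y" using mem_peirce_one_iff[OF f(1)] by auto
    have "y * h = y" unfolding h_def by (simp add: algebra_simps yf mult.assoc[symmetric])
    then show "y \<in> peirce 1 h" using mem_peirce_one_iff[OF hh] by auto
  qed
  moreover have "g * h = g" unfolding h_def by (simp add: algebra_simps gf gf' g(1))
  then have "g \<in> peirce 1 h" using mem_peirce_one_iff[OF hh] by auto
  moreover have "g \<notin> peirce 1 f" using mem_peirce_one_iff[OF f(1)] gf g(2) by auto
  ultimately show ?thesis using hh by blast
qed

lemma left_ideal_eq_peirce:
  assumes L: "left_ideal scale L"
  shows "\<exists>f. f * f = f \<and> L = peirce 1 f"
proof -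
  let ?P = "\<lambda>d. \<exists>f. f * f = f \<and> f \<in> L \<and> d = dim (peirce 1 f)"
  have P0: "?P (dim (peirce 1 0))" using left_ideal_0[OF L] by (intro exI[of _ 0]) auto
  have bound: "\<forall>d. ?P d \<longrightarrow> d \<le> dimension" using dim_subset_UNIV by auto
  obtain d where d: "?P d" "\<And>d'. ?P d' \<Longrightarrow> d' \<le> d"
    using Nat.ex_has_greatest_nat[OF P0 bound] by blast
  then obtain f where f: "f * f = f" "f \<in> L" "d = dim (peirce 1 f)" by blast
  have "L \<subseteq> peirce 1 f"
  proof
    fix x assume x: "x \<in> L"
    show "x \<in> peirce 1 f"
    proof (rule ccontr)
      assume "x \<notin> peirce 1 f"
      then obtain h where h: "h * h = h" "h \<in> L" "peirce 1 f \<subset> peirce 1 h"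
        using exists_idempotent_peirce_psubset[OF L f(1,2) x] by blast
      then have "dim (peirce 1 f) < dim (peirce 1 h)"
        by (intro dim_less_if_psubset subspace_peirce)
      moreover have "dim (peirce 1 h) \<le> d" using d(2) h(1,2) by blast
      ultimately show False using f(3) by simp
    qed
  qed
  moreover have "peirce 1 f \<subseteq> L" using left_ideal_mult[OF L f(2)] by (auto simp: peirce_def)
  ultimately show ?thesis using f(1) by blast
qed

lemma primitive_idempotent_below:
  assumes e: "e * e = e" "e \<noteq> 0"
  shows "\<exists>q. primitive_idempotent q \<and> q * e = q \<and> e * q = q"
proof -
  obtain M where M: "minimal_left_ideal M" "M \<subseteq> peirce 1 e"
    using exists_minimal_left_ideal[OF left_ideal_peirce] self_mem_peirce_one e(2) by blast
  then obtain g where g: "g * g = g" "g \<noteq> 0" "M = peirce 1 g"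
    using minimal_left_ideal_eq_peirce by blast
  have "g \<in> M" using g(3) self_mem_peirce_one by simp
  then have ge: "g * e = g" using M mem_peirce_one_iff[OF e(1)] by auto
  define q where "q = e * g"
  have qq: "q * q = q" and qe: "q * e = q" and eq: "e * q = q"
    unfolding q_def by (metis ge g(1) e(1) mult.assoc)+
  have "g * q = g" unfolding q_def by (metis ge g(1) mult.assoc)
  then have "q \<noteq> 0" using g(2) by auto
  then have "peirce 1 q \<noteq> {0}" using self_mem_peirce_one by blast
  moreover have "peirce 1 q \<subseteq> M" unfolding g(3) peirce_def q_def by (auto simp: mult.assoc[symmetric])
  ultimately have "peirce 1 q = M"
    using M(1) left_ideal_peirce unfolding minimal_left_ideal_def by blast
  then show ?thesis using M(1) qq qe eq by (auto simp: primitive_idempotent_def)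
qed

lemma primitive_idempotent_nonzero: "primitive_idempotent q \<Longrightarrow> q \<noteq> 0"
  by (auto simp: primitive_idempotent_def minimal_left_ideal_def)

lemma primitive_idempotent_left_ideal_eq:
  assumes "primitive_idempotent q" "left_ideal scale L" "L \<subseteq> peirce 1 q" "L \<noteq> {0}"
  shows "L = peirce 1 q"
  using assms by (auto simp: primitive_idempotent_def minimal_left_ideal_def)

lemma dim_peirce_primitive_pos: "primitive_idempotent q \<Longrightarrow> 0 < dim (peirce 1 q)"
  using dim_pos_if_nonzero_mem self_mem_peirce_one primitive_idempotent_nonzero by blast

text \<open>A primitive idempotent \<open>q\<close> is a left multiple of an element \<open>u \<in> pA\<close>, for any nonzero \<open>p\<close>:
  the left ideal \<open>Au\<close>, with \<open>u = pbq \<noteq> 0\<close>, is nonzero and contained in the minimal left ideal \<open>Aq\<close>.\<close>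

lemma primitive_idempotent_left_multiple:
  assumes p: "p * p = p" "p \<noteq> 0" and q: "primitive_idempotent q"
  obtains u v where "p * u = u" "v * u = q"
proof -
  have qq: "q * q = q" using q by (simp add: primitive_idempotent_def)
  obtain b where "p * b * q \<noteq> 0" using sandwich_nonzero p(2) primitive_idempotent_nonzero[OF q] by blast
  moreover define u where "u = p * b * q"
  ultimately have u0: "u \<noteq> 0" by simp
  have pu: "p * u = u" unfolding u_def by (simp add: p(1) mult.assoc[symmetric])
  have uq: "u * q = u" unfolding u_def by (simp add: qq mult.assoc)
  have "1 * a * u = 1 * (a * u) * q" for a using uq by (simp add: mult.assoc)
  then have "peirce 1 u \<subseteq> peirce 1 q" unfolding peirce_def by auto
  moreover have "peirce 1 u \<noteq> {0}" using u0 self_mem_peirce_one[of u] by blast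
  ultimately have "peirce 1 u = peirce 1 q"
    by (rule primitive_idempotent_left_ideal_eq[OF q left_ideal_peirce])
  then have "q \<in> peirce 1 u" using self_mem_peirce_one by simp
  then obtain v where "v * u = q" by (auto simp: peirce_def)
  with pu show ?thesis using that by blast
qed

lemma linear_mult_left: "Vector_Spaces.linear scale scale (\<lambda>x. a * x)"
  unfolding linear_iff using vector_space_axioms by (simp add: distrib_left scale_mult_right)

lemma linear_mult_right: "Vector_Spaces.linear scale scale (\<lambda>x. x * a)"
  unfolding linear_iff using vector_space_axioms by (simp add: distrib_right scale_mult_left)

lemma dim_le_if_subset_image:
  assumes g: "Vector_Spaces.linear scale scale g" and "T \<subseteq> g ` S"
  shows "dim T \<le> dim S"
proof -
  interpret endo: finite_dimensional_vector_space_pair_1 scale Bs scale by unfold_locales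
  show ?thesis using dim_subset[OF assms(2)] endo.dim_image_le[OF g, of S] by linarith
qed

lemma dim_peirce_primitive_left_le:
  assumes "p * p = p" "p \<noteq> 0" "primitive_idempotent q"
  shows "dim (peirce q f) \<le> dim (peirce p f)"
proof -
  obtain u v where uv: "p * u = u" "v * u = q"
    using primitive_idempotent_left_multiple[OF assms] .
  have "q * a * f = v * (p * (u * a) * f)" for a
    using uv by (simp add: mult.assoc[symmetric])
  then have "peirce q f \<subseteq> (\<lambda>x. v * x) ` peirce p f" by (auto simp: peirce_def)
  then show ?thesis by (rule dim_le_if_subset_image[OF linear_mult_left])
qed

lemma dim_peirce_primitive_right_le:
  assumes "p * p = p" "p \<noteq> 0" "primitive_idempotent q"
  shows "dim (peirce f q) \<le> dim (peirce f p)"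
proof -
  obtain u v where uv: "p * u = u" "v * u = q"
    using primitive_idempotent_left_multiple[OF assms] .
  have "f * a * q = f * (a * v) * p * u" for a
    using uv by (simp add: mult.assoc)
  then have "peirce f q \<subseteq> (\<lambda>x. x * u) ` peirce f p" by (auto simp: peirce_def)
  then show ?thesis by (rule dim_le_if_subset_image[OF linear_mult_right])
qed

lemma
  assumes "primitive_idempotent p" "primitive_idempotent q"
  shows dim_peirce_primitive_left: "dim (peirce q f) = dim (peirce p f)"
    and dim_peirce_primitive_right: "dim (peirce f q) = dim (peirce f p)"
  using assms dim_peirce_primitive_left_le dim_peirce_primitive_right_le
    primitive_idempotent_nonzero by (metis le_antisym primitive_idempotent_def)+

section \<open>Dimensions of Peirce spaces\<close>

lemma dim_direct_sum:
  assumes "subspace S" "subspace T" "S \<inter> T \<subseteq> {0}"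
  shows "dim {x + y |x y. x \<in> S \<and> y \<in> T} = dim S + dim T"
proof -
  have "dim (S \<inter> T) = 0" using assms(3) by simp
  then show ?thesis using dim_sums_Int[OF assms(1,2)] by (simp del: dim_eq_0)
qed

lemma dim_peirce_add_right:
  assumes "q * q = q" "g * g = g" "q * g = 0" "g * q = 0"
  shows "dim (peirce p (q + g)) = dim (peirce p q) + dim (peirce p g)"
proof -
  have "peirce p (q + g) = {x + y |x y. x \<in> peirce p q \<and> y \<in> peirce p g}"
  proof (intro equalityI subsetI)
    fix z assume "z \<in> peirce p (q + g)"
    then obtain a where "z = p * a * (q + g)" by (auto simp: peirce_def)
    then have "z = p * a * q + p * a * g" by (simp add: distrib_left)
    then show "z \<in> {x + y |x y. x \<in> peirce p q \<and> y \<in> peirce p g}" by (auto simp: peirce_def)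
  next
    fix z assume "z \<in> {x + y |x y. x \<in> peirce p q \<and> y \<in> peirce p g}"
    then obtain a b where z: "z = p * a * q + p * b * g" by (auto simp: peirce_def)
    have "(a * q + b * g) * (q + g) = a * (q * q) + a * (q * g) + (b * (g * q) + b * (g * g))"
      by (simp add: distrib_left distrib_right mult.assoc)
    then have "(a * q + b * g) * (q + g) = a * q + b * g" by (simp add: assms)
    then have "p * (a * q + b * g) * (q + g) = p * (a * q + b * g)" by (metis mult.assoc)
    then have "z = p * (a * q + b * g) * (q + g)" unfolding z by (simp add: distrib_left mult.assoc)
    then show "z \<in> peirce p (q + g)" by (auto simp: peirce_def)
  qed
  moreover have "peirce p q \<inter> peirce p g \<subseteq> {0}"
  proof
    fix z assume "z \<in> peirce p q \<inter> peirce p g"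
    then obtain a b where "z = p * a * q" "z = p * b * g" unfolding peirce_def by blast
    then have "z * q = z" "z * q = 0"
      by (metis mult.assoc assms(1), metis mult.assoc assms(4) mult_zero_right)
    then show "z \<in> {0}" by simp
  qed
  ultimately show ?thesis using dim_direct_sum subspace_peirce by simp
qed

lemma dim_peirce_add_left:
  assumes "q * q = q" "g * g = g" "q * g = 0" "g * q = 0"
  shows "dim (peirce (q + g) f) = dim (peirce q f) + dim (peirce g f)"
proof -
  have "peirce (q + g) f = {x + y |x y. x \<in> peirce q f \<and> y \<in> peirce g f}"
  proof (intro equalityI subsetI)
    fix z assume "z \<in> peirce (q + g) f"
    then obtain a where "z = (q + g) * a * f" by (auto simp: peirce_def)
    then have "z = q * a * f + g * a * f" by (simp add: distrib_right)
    then show "z \<in> {x + y |x y. x \<in> peirce q f \<and> y \<in> peirce g f}" by (auto simp: peirce_def)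
  next
    fix z assume "z \<in> {x + y |x y. x \<in> peirce q f \<and> y \<in> peirce g f}"
    then obtain a b where z: "z = q * a * f + g * b * f" by (auto simp: peirce_def)
    have "(q + g) * (q * a + g * b) = (q * q) * a + (g * q) * a + ((q * g) * b + (g * g) * b)"
      by (simp add: distrib_left distrib_right mult.assoc add_ac)
    then have "(q + g) * (q * a + g * b) = q * a + g * b" by (simp add: assms)
    then have "z = (q + g) * (q * a + g * b) * f" unfolding z by (simp add: distrib_right)
    then show "z \<in> peirce (q + g) f" by (auto simp: peirce_def)
  qed
  moreover have "peirce q f \<inter> peirce g f \<subseteq> {0}"
  proof
    fix z assume "z \<in> peirce q f \<inter> peirce g f"
    then obtain a b where "z = q * a * f" "z = g * b * f" unfolding peirce_def by blast
    then have "q * z = z" "q * z = 0"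
      by (metis mult.assoc assms(1), metis mult.assoc assms(3) mult_zero_left)
    then show "z \<in> {0}" by simp
  qed
  ultimately show ?thesis using dim_direct_sum subspace_peirce by simp
qed

lemma idempotent_split_primitive:
  assumes f: "f * f = f" "f \<noteq> 0"
  obtains q g where "primitive_idempotent q" "g * g = g" "q * g = 0" "g * q = 0" "f = q + g"
proof -
  obtain q where q: "primitive_idempotent q" "q * f = q" "f * q = q"
    using primitive_idempotent_below[OF f] by blast
  have qq: "q * q = q" using q(1) by (simp add: primitive_idempotent_def)
  have "(f - q) * (f - q) = f * f - f * q - (q * f - q * q)"
    by (simp add: left_diff_distrib right_diff_distrib)
  also have "\<dots> = f - q" using f(1) q(2,3) qq by simp
  finally have "(f - q) * (f - q) = f - q" .
  moreover have "q * (f - q) = 0" "(f - q) * q = 0"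
    by (simp_all add: right_diff_distrib left_diff_distrib q(2,3) qq)
  ultimately show ?thesis using that q(1) by simp
qed

lemma idempotent_induct [consumes 1, case_names zero add_primitive]:
  assumes "f * f = f" and "P 0"
    and "\<And>q g. primitive_idempotent q \<Longrightarrow> g * g = g \<Longrightarrow> q * g = 0 \<Longrightarrow> g * q = 0 \<Longrightarrow> P g
      \<Longrightarrow> P (q + g)"
  shows "P f"
  using assms(1)
proof (induction "dim (peirce 1 f)" arbitrary: f rule: less_induct)
  case less
  show ?case
  proof (cases "f = 0")
    case False
    then obtain q g where d: "primitive_idempotent q" "g * g = g" "q * g = 0" "g * q = 0" "f = q + g"
      using idempotent_split_primitive less.prems by blast
    have "dim (peirce 1 f) = dim (peirce 1 q) + dim (peirce 1 g)"
      using d by (simp add: dim_peirce_add_right primitive_idempotent_def)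
    then have "dim (peirce 1 g) < dim (peirce 1 f)"
      using dim_peirce_primitive_pos[OF d(1)] by simp
    then show ?thesis using less.hyps d assms(3) by blast
  qed (simp add: assms(2))
qed

text \<open>Counting with primitive idempotents: writing \<open>s = dim (Ap\<^sub>0)\<close> and \<open>d = dim (p\<^sub>0Ap\<^sub>0)\<close>
  for a fixed primitive \<open>p\<^sub>0\<close>, one has \<open>dim (qAf) \<cdot> s = dim (Af) \<cdot> d\<close> for primitive \<open>q\<close>,
  hence \<open>dim (eAf) \<cdot> s\<^sup>2 = dim (Ae) \<cdot> dim (Af) \<cdot> d\<close>, and \<open>e = f = 1\<close> gives \<open>s\<^sup>2 = dim A \<cdot> d\<close>.\<close>

lemma dim_peirce_primitive_left_mult:
  assumes p0: "primitive_idempotent p0" and q: "primitive_idempotent q" and f: "f * f = f"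
  shows "dim (peirce q f) * dim (peirce 1 p0) = dim (peirce 1 f) * dim (peirce p0 p0)"
  using f
proof (induction rule: idempotent_induct)
  case (add_primitive q' g)
  then have "q' * q' = q'" by (simp add: primitive_idempotent_def)
  with add_primitive show ?case
    using dim_peirce_primitive_right[OF p0 add_primitive(1), of 1]
      dim_peirce_primitive_right[OF p0 add_primitive(1), of q] dim_peirce_primitive_left[OF p0 q, of p0]
    by (simp add: dim_peirce_add_right algebra_simps)
qed (simp del: dim_eq_0)

lemma dim_peirce_mult_square:
  assumes p0: "primitive_idempotent p0" and e: "e * e = e" and f: "f * f = f"
  shows "dim (peirce e f) * dim (peirce 1 p0) ^ 2
    = dim (peirce 1 e) * dim (peirce 1 f) * dim (peirce p0 p0)"
  using e
proof (induction rule: idempotent_induct)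
  case (add_primitive q g)
  then have "q * q = q" by (simp add: primitive_idempotent_def)
  with add_primitive show ?case
    using dim_peirce_primitive_left_mult[OF p0 add_primitive(1) f]
      dim_peirce_primitive_right[OF p0 add_primitive(1), of 1]
    by (simp add: dim_peirce_add_right dim_peirce_add_left power2_eq_square algebra_simps)
qed (simp del: dim_eq_0)

lemma dim_peirce:
  assumes e: "e * e = e" and f: "f * f = f"
  shows "dim (peirce e f) * dim (UNIV :: 'a set) = dim (peirce 1 e) * dim (peirce 1 f)"
proof -
  obtain p0 where p0: "primitive_idempotent p0" using primitive_idempotent_below[of 1] by auto
  define s where "s = dim (peirce 1 p0)"
  define d where "d = dim (peirce p0 p0)"
  define N where "N = dim (UNIV :: 'a set)"
  have "p0 \<in> peirce p0 p0"
    using p0 mem_peirce_iff[of p0 p0 p0] by (simp add: primitive_idempotent_def)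
  then have "0 < d"
    unfolding d_def using dim_pos_if_nonzero_mem primitive_idempotent_nonzero[OF p0] by blast
  have "N * s ^ 2 = N * (N * d)"
    using dim_peirce_mult_square[OF p0, of 1 1] unfolding s_def d_def N_def peirce_one_one by auto
  then have "s ^ 2 = N * d" using dim_UNIV_pos unfolding N_def by simp
  moreover have "dim (peirce e f) * s ^ 2 = dim (peirce 1 e) * dim (peirce 1 f) * d"
    using dim_peirce_mult_square[OF p0 e f] unfolding s_def d_def .
  ultimately show ?thesis using \<open>0 < d\<close> unfolding N_def by (simp add: algebra_simps)
qed

end

lemma central_simple_algebra_fd_simple_algebra:
  assumes "central_simple_algebra scale n"
  obtains Bs where "fd_simple_algebra scale Bs"
proof -
  obtain Bs where "finite_dimensional_vector_space scale Bs"
    using assms by (auto simp: central_simple_algebra_def)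
  moreover have "\<forall>c x y. scale c (x * y) = scale c x * y \<and> scale c (x * y) = x * scale c y"
    and "\<forall>I. two_sided_ideal scale I \<longrightarrow> I = {0} \<or> I = UNIV"
    using assms unfolding central_simple_algebra_def k_algebra_def by blast+
  ultimately show ?thesis
    using that unfolding fd_simple_algebra_def fd_simple_algebra_axioms_def by blast
qed

section \<open>Chains\<close>

lemma chain_le_last:
  fixes I :: "nat \<Rightarrow> 'a::order"
  assumes chain: "\<forall>j. 1 \<le> j \<and> j + 1 < r \<longrightarrow> I j \<le> I (j + 1)"
    and last: "I (r - 1) \<le> X" and j: "j \<in> {1..<r}"
  shows "I j \<le> X"
proof -
  have "k < r \<Longrightarrow> I j \<le> I k" if "j \<le> k" for k
    using that
  proof (induction k rule: dec_induct)
    case (step k)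
    then have "I k \<le> I (k + 1)" using chain j by simp
    with step show ?case by simp
  qed simp
  moreover have "j \<le> r - 1" "r - 1 < r" using j by auto
  ultimately show ?thesis using last by (meson order_trans)
qed

lemma bij_betw_chains:
  fixes f :: "'a::order \<Rightarrow> 'b::order" and r :: nat
  assumes bij: "bij_betw f S T"
    and le_iff: "\<And>X Y. X \<in> S \<Longrightarrow> Y \<in> S \<Longrightarrow> f X \<le> f Y \<longleftrightarrow> X \<le> Y"
    and PQ: "\<And>j X. j \<in> {1..<r} \<Longrightarrow> X \<in> S \<Longrightarrow> Q j (f X) \<longleftrightarrow> P j X"
  shows "bij_betw (\<lambda>I. \<lambda>j\<in>{1..<r}. f (I j))
    {I \<in> {1..<r} \<rightarrow>\<^sub>E UNIV. (\<forall>j\<in>{1..<r}. I j \<in> S \<and> P j (I j)) \<and>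
       (\<forall>j. 1 \<le> j \<and> j + 1 < r \<longrightarrow> I j \<le> I (j + 1))}
    {J \<in> {1..<r} \<rightarrow>\<^sub>E UNIV. (\<forall>j\<in>{1..<r}. J j \<in> T \<and> Q j (J j)) \<and>
       (\<forall>j. 1 \<le> j \<and> j + 1 < r \<longrightarrow> J j \<le> J (j + 1))}"
    (is "bij_betw ?F ?D ?C")
proof (rule bij_betw_byWitness[where f' = "\<lambda>J. \<lambda>j\<in>{1..<r}. inv_into S f (J j)"])
  have inv: "inv_into S f (f X) = X" if "X \<in> S" for X
    using bij_betw_inv_into_left[OF bij that] .
  have inv': "f (inv_into S f Y) = Y" "inv_into S f Y \<in> S" if "Y \<in> T" for Y
    using bij_betw_inv_into_right[OF bij that] bij_betw_apply[OF bij_betw_inv_into[OF bij] that] by auto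
  have fS: "f X \<in> T" if "X \<in> S" for X using bij_betw_apply[OF bij that] .
  show "\<forall>I \<in> ?D. (\<lambda>j\<in>{1..<r}. inv_into S f (?F I j)) = I"
  proof
    fix I assume I: "I \<in> ?D"
    show "(\<lambda>j\<in>{1..<r}. inv_into S f (?F I j)) = I"
      by (rule extensionalityI[of _ "{1..<r}"]) (use I inv in \<open>auto simp: PiE_def\<close>)
  qed
  show "\<forall>J \<in> ?C. ?F (\<lambda>j\<in>{1..<r}. inv_into S f (J j)) = J"
  proof
    fix J assume J: "J \<in> ?C"
    show "?F (\<lambda>j\<in>{1..<r}. inv_into S f (J j)) = J"
      by (rule extensionalityI[of _ "{1..<r}"]) (use J inv' in \<open>auto simp: PiE_def\<close>)
  qed
  show "?F ` ?D \<subseteq> ?C"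
  proof (rule image_subsetI)
    fix I assume I: "I \<in> ?D"
    have "f (I j) \<le> f (I (j + 1))" if "1 \<le> j" "j + 1 < r" for j
    proof -
      have "j \<in> {1..<r}" "j + 1 \<in> {1..<r}" using that by auto
      then have "I j \<in> S" "I (j + 1) \<in> S" "I j \<le> I (j + 1)" using I that by auto
      then show ?thesis using le_iff by simp
    qed
    moreover have "f (I j) \<in> T \<and> Q j (f (I j))" if "j \<in> {1..<r}" for j
      using I fS PQ that by simp
    ultimately show "?F I \<in> ?C" by simp
  qed
  show "(\<lambda>J. \<lambda>j\<in>{1..<r}. inv_into S f (J j)) ` ?C \<subseteq> ?D"
  proof (rule image_subsetI)
    fix J assume J: "J \<in> ?C"
    define I where "I = (\<lambda>j\<in>{1..<r}. inv_into S f (J j))"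
    have IS: "I j \<in> S" and fI: "f (I j) = J j" if "j \<in> {1..<r}" for j
      using J inv' that by (auto simp: I_def)
    have "I j \<le> I (j + 1)" if "1 \<le> j" "j + 1 < r" for j
    proof -
      have "f (I j) \<le> f (I (j + 1))" using J fI that by auto
      then show ?thesis using le_iff IS that by auto
    qed
    moreover have "I j \<in> S \<and> P j (I j)" if "j \<in> {1..<r}" for j
      using J PQ[OF that IS[OF that]] fI[OF that] IS[OF that] that by auto
    ultimately show "I \<in> ?D" by (auto simp: I_def)
  qed
qed

section \<open>The quotient \<open>I\<^sub>r / I\<^sub>r\<^sup>\<circ>I\<^sub>r\<close>\<close>

locale left_ideal_quotient = fd_simple_algebra sA BsA
  for sA :: "'k::field \<Rightarrow> 'a::ring_1 \<Rightarrow> 'a" and BsA +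
  fixes sB :: "'k \<Rightarrow> 'b::ring_1 \<Rightarrow> 'b" and Ir :: "'a set" and \<pi> :: "'a \<Rightarrow> 'b" and er :: 'a
  assumes vector_space_B: "vector_space sB"
    and idempotent_er: "er * er = er" and Ir_eq: "Ir = peirce 1 er"
    and quotient_map: "is_quotient_map sA sB Ir (prod_span sA (right_annihilator Ir) Ir) \<pi>"
begin

abbreviation Ker :: "'a set" where
  "Ker \<equiv> prod_span sA (right_annihilator Ir) Ir"

lemma left_ideal_Ir: "left_ideal sA Ir"
  using Ir_eq left_ideal_peirce by simp

lemma mem_Ir_iff: "x \<in> Ir \<longleftrightarrow> x * er = x"
  using Ir_eq mem_peirce_one_iff[OF idempotent_er] by simp

lemma er_mem_Ir: "er \<in> Ir"
  using mem_Ir_iff idempotent_er by simp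

lemma mult_mem_Ir: "x \<in> Ir \<Longrightarrow> a * x \<in> Ir"
  using left_ideal_mult[OF left_ideal_Ir] .

lemma
  assumes "x \<in> Ir" "y \<in> Ir"
  shows \<pi>_add: "\<pi> (x + y) = \<pi> x + \<pi> y" and \<pi>_mult: "\<pi> (x * y) = \<pi> x * \<pi> y"
  using assms quotient_map by (simp_all add: is_quotient_map_def)

lemma \<pi>_scale: "x \<in> Ir \<Longrightarrow> \<pi> (sA c x) = sB c (\<pi> x)"
  using quotient_map by (simp add: is_quotient_map_def)

lemma \<pi>_surj: "\<pi> ` Ir = UNIV"
  using quotient_map by (simp add: is_quotient_map_def)

lemma \<pi>_eq_0_iff: "x \<in> Ir \<Longrightarrow> \<pi> x = 0 \<longleftrightarrow> x \<in> Ker"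
  using quotient_map by (auto simp: is_quotient_map_def)

lemma \<pi>_0: "\<pi> 0 = 0"
  using \<pi>_eq_0_iff[OF left_ideal_0[OF left_ideal_Ir]] by (simp add: prod_span_def span_zero)

lemma \<pi>_diff: "x \<in> Ir \<Longrightarrow> y \<in> Ir \<Longrightarrow> \<pi> (x - y) = \<pi> x - \<pi> y"
  using \<pi>_add[of "x - y" y] left_ideal_diff[OF left_ideal_Ir] by (simp add: algebra_simps)

lemma er_mult_Ker: "z \<in> Ker \<Longrightarrow> er * z = 0"
  unfolding prod_span_def
proof (induction rule: span_induct)
  case base
  show ?case by (rule subspaceI) (auto simp: distrib_left scale_mult_right[symmetric])
next
  case (step x)
  then obtain u w where "x = u * w" "u \<in> right_annihilator Ir" by blast
  then show ?case using er_mem_Ir by (simp add: right_annihilator_def mult.assoc[symmetric])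
qed

lemma \<pi>_eq_iff:
  assumes x: "x \<in> Ir" and y: "y \<in> Ir"
  shows "\<pi> x = \<pi> y \<longleftrightarrow> er * x = er * y"
proof -
  have "\<pi> x = \<pi> y \<longleftrightarrow> x - y \<in> Ker"
    using \<pi>_eq_0_iff[OF left_ideal_diff[OF left_ideal_Ir x y]] \<pi>_diff[OF x y] by simp
  also have "\<dots> \<longleftrightarrow> er * x = er * y"
  proof
    assume "x - y \<in> Ker"
    then have "er * (x - y) = 0" by (rule er_mult_Ker)
    then show "er * x = er * y" by (simp add: right_diff_distrib)
  next
    assume "er * x = er * y"
    then have "(1 - er) * x - (1 - er) * y = x - y" by (simp add: left_diff_distrib)
    moreover have "1 - er \<in> right_annihilator Ir"
      unfolding right_annihilator_def using mem_Ir_iff by (simp add: right_diff_distrib)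
    then have "(1 - er) * x - (1 - er) * y \<in> Ker"
      using x y unfolding prod_span_def by (blast intro: span_diff span_base)
    ultimately show "x - y \<in> Ker" by simp
  qed
  finally show ?thesis .
qed

lemma \<pi>_er_mult: "x \<in> Ir \<Longrightarrow> \<pi> (er * x) = \<pi> x"
  using \<pi>_eq_iff[OF mult_mem_Ir] idempotent_er by (simp add: mult.assoc[symmetric])

lemma kernel_restrict_left_ideal:
  assumes L: "left_ideal sA L" "L \<subseteq> Ir"
  shows "{x \<in> L. \<pi> x = 0} = prod_span sA (right_annihilator Ir) L"
proof -
  obtain f where f: "f * f = f" "L = peirce 1 f" using left_ideal_eq_peirce[OF L(1)] by blast
  have fL: "f \<in> L" using f(2) self_mem_peirce_one by simp
  define G where "G = {u * w | u w. u \<in> right_annihilator Ir \<and> w \<in> L}"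
  have ps: "prod_span sA (right_annihilator Ir) L = span G" unfolding G_def prod_span_def ..
  show ?thesis unfolding ps
  proof (intro equalityI subsetI)
    fix x assume "x \<in> {x \<in> L. \<pi> x = 0}"
    then have x: "x \<in> L" "x \<in> Ker" using \<pi>_eq_0_iff L(2) by auto
    \<comment> \<open>right multiplication by \<open>f\<close> maps \<open>I\<^sub>r\<^sup>\<circ>I\<^sub>r\<close> into \<open>I\<^sub>r\<^sup>\<circ>L\<close> and fixes \<open>L\<close>\<close>
    have "x * f \<in> span G"
      using x(2) unfolding prod_span_def
    proof (induction rule: span_induct)
      case base
      show ?case
        by (rule subspaceI) (auto simp: distrib_right span_zero span_add span_scale scale_mult_left[symmetric])
    next
      case (step z)
      then obtain u w where uw: "z = u * w" "u \<in> right_annihilator Ir" "w \<in> Ir" by blast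
      have "u * (w * f) \<in> G" unfolding G_def using uw(2) left_ideal_mult[OF L(1) fL] by blast
      then show ?case unfolding uw(1) by (simp add: mult.assoc span_base)
    qed
    moreover have "x * f = x" using x(1) f mem_peirce_one_iff by blast
    ultimately show "x \<in> span G" by simp
  next
    fix z assume z: "z \<in> span G"
    have "G \<subseteq> L" unfolding G_def using left_ideal_mult[OF L(1)] by blast
    then have "z \<in> L" using span_minimal[OF _ left_ideal_subspace[OF L(1)]] z by blast
    moreover have "G \<subseteq> {u * w | u w. u \<in> right_annihilator Ir \<and> w \<in> Ir}" unfolding G_def using L(2) by blast
    then have "z \<in> Ker" unfolding prod_span_def using span_mono z by blast
    ultimately show "z \<in> {x \<in> L. \<pi> x = 0}" using \<pi>_eq_0_iff L(2) by blast
  qed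
qed

lemma left_ideal_image:
  assumes L: "left_ideal sA L" "L \<subseteq> Ir"
  shows "left_ideal sB (\<pi> ` L)"
proof -
  have "module sB" using vector_space_B by (simp add: module_iff_vector_space)
  moreover have "\<pi> 0 \<in> \<pi> ` L" using left_ideal_0[OF L(1)] by (rule imageI)
  moreover have "\<pi> x + \<pi> y \<in> \<pi> ` L" if "x \<in> L" "y \<in> L" for x y
    using that L \<pi>_add[of x y] left_ideal_add[OF L(1)] by (metis imageI subsetD)
  moreover have "sB c (\<pi> x) \<in> \<pi> ` L" if "x \<in> L" for c x
    using that L \<pi>_scale[of x c] left_ideal_scale[OF L(1)] by (metis imageI subsetD)
  moreover have "b * \<pi> x \<in> \<pi> ` L" if "x \<in> L" for b x
  proof -
    obtain z where "z \<in> Ir" "\<pi> z = b" using \<pi>_surj by (metis UNIV_I imageE)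
    then show ?thesis
      using that L \<pi>_mult[of z x] left_ideal_mult[OF L(1)] by (metis imageI subsetD)
  qed
  ultimately show ?thesis unfolding left_ideal_def module.subspace_def[OF \<open>module sB\<close>]
    by (auto simp: \<pi>_0)
qed

definition pullback :: "'b set \<Rightarrow> 'a set" where
  "pullback J = {y \<in> Ir. \<forall>a. \<pi> (a * y) \<in> J}"

lemma pullback_mono: "J \<subseteq> J' \<Longrightarrow> pullback J \<subseteq> pullback J'"
  unfolding pullback_def by blast

lemma pullback_subset: "pullback J \<subseteq> Ir"
  unfolding pullback_def by blast

lemma left_ideal_pullback:
  assumes J: "left_ideal sB J"
  shows "left_ideal sA (pullback J)"
proof (rule left_idealI)
  have "module sB" using vector_space_B by (simp add: module_iff_vector_space)
  then have J0: "0 \<in> J" and Jadd: "\<And>x y. x \<in> J \<Longrightarrow> y \<in> J \<Longrightarrow> x + y \<in> J"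
    and Jscale: "\<And>c x. x \<in> J \<Longrightarrow> sB c x \<in> J"
    using J unfolding left_ideal_def module.subspace_def[OF \<open>module sB\<close>] by auto
  show "0 \<in> pullback J" unfolding pullback_def using left_ideal_0[OF left_ideal_Ir] \<pi>_0 J0 by simp
  show "x + y \<in> pullback J" if "x \<in> pullback J" "y \<in> pullback J" for x y
    using that Jadd \<pi>_add[OF mult_mem_Ir mult_mem_Ir] left_ideal_add[OF left_ideal_Ir]
    by (simp add: pullback_def distrib_left)
  show "sA c x \<in> pullback J" if "x \<in> pullback J" for c x
    using that Jscale \<pi>_scale[OF mult_mem_Ir] left_ideal_scale[OF left_ideal_Ir]
    by (simp add: pullback_def scale_mult_right[symmetric])
  show "b * x \<in> pullback J" if "x \<in> pullback J" for b x
    using that mult_mem_Ir by (simp add: pullback_def mult.assoc[symmetric])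
qed

lemma image_pullback:
  assumes J: "left_ideal sB J"
  shows "\<pi> ` pullback J = J"
proof (intro equalityI subsetI)
  fix t assume "t \<in> \<pi> ` pullback J"
  then show "t \<in> J" unfolding pullback_def by (auto dest: spec[of _ 1])
next
  fix t assume t: "t \<in> J"
  obtain x where x: "x \<in> Ir" "\<pi> x = t" using \<pi>_surj by (metis UNIV_I imageE)
  have "\<pi> (a * (er * x)) \<in> J" for a
  proof -
    have "\<pi> (er * (a * er * x)) = \<pi> (a * er * x)"
      using \<pi>_er_mult mult_mem_Ir[OF x(1)] by blast
    then have "\<pi> (a * (er * x)) = \<pi> (er * a * er * x)" by (simp add: mult.assoc)
    also have "\<dots> = \<pi> (er * a * er) * t"
      using \<pi>_mult[OF mult_mem_Ir[OF er_mem_Ir] x(1)] x(2) by simp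
    finally show ?thesis using J t by (simp add: left_ideal_def)
  qed
  then have "er * x \<in> pullback J" unfolding pullback_def using mult_mem_Ir[OF x(1)] by blast
  moreover have "\<pi> (er * x) = t" using \<pi>_er_mult[OF x(1)] x(2) by simp
  ultimately show "t \<in> \<pi> ` pullback J" by blast
qed

lemma pullback_image:
  assumes L: "left_ideal sA L" "L \<subseteq> Ir"
  shows "pullback (\<pi> ` L) = L"
proof (intro equalityI subsetI)
  fix y assume "y \<in> pullback (\<pi> ` L)"
  then have y: "y \<in> Ir" and img: "\<And>a. \<pi> (a * y) \<in> \<pi> ` L" unfolding pullback_def by auto
  show "y \<in> L"
  proof (cases "er = 0")
    case True
    then have "y = 0" using y mem_Ir_iff by simp
    then show ?thesis using left_ideal_0[OF L(1)] by simp
  next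
    case False
    have "er * a * y \<in> L" for a
    proof -
      obtain x where x: "x \<in> L" "\<pi> (a * y) = \<pi> x" using img by blast
      then have "er * (a * y) = er * x" using \<pi>_eq_iff mult_mem_Ir[OF y] L(2) by blast
      then show ?thesis using left_ideal_mult[OF L(1) x(1)] by (simp add: mult.assoc)
    qed
    then show ?thesis using mem_left_ideal_if_sandwiched[OF L(1) False] by blast
  qed
next
  fix y assume "y \<in> L"
  then show "y \<in> pullback (\<pi> ` L)"
    unfolding pullback_def using L left_ideal_mult[OF L(1)] by blast
qed

lemma image_subset_image_iff:
  assumes "left_ideal sA L" "L \<subseteq> Ir" "left_ideal sA L'" "L' \<subseteq> Ir"
  shows "\<pi> ` L \<subseteq> \<pi> ` L' \<longleftrightarrow> L \<subseteq> L'"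
  using pullback_mono pullback_image assms by (metis image_mono)

lemma bij_betw_image_left_ideals:
  "bij_betw ((`) \<pi>) {L. left_ideal sA L \<and> L \<subseteq> Ir} {J. left_ideal sB J}"
proof (rule bij_betw_byWitness[where f' = pullback])
  show "\<forall>L \<in> {L. left_ideal sA L \<and> L \<subseteq> Ir}. pullback (\<pi> ` L) = L"
    using pullback_image by blast
  show "\<forall>J \<in> {J. left_ideal sB J}. \<pi> ` pullback J = J"
    using image_pullback by blast
  show "(`) \<pi> ` {L. left_ideal sA L \<and> L \<subseteq> Ir} \<subseteq> {J. left_ideal sB J}"
    using left_ideal_image by blast
  show "pullback ` {J. left_ideal sB J} \<subseteq> {L. left_ideal sA L \<and> L \<subseteq> Ir}"
    using left_ideal_pullback pullback_subset by blast
qed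

text \<open>For \<open>L = Af\<close>, the map \<open>x \<mapsto> \<pi>(x e\<^sub>r)\<close>, which unlike \<open>\<pi>\<close> is defined and \<open>k\<close>-linear on
  all of \<open>A\<close>, restricts to an injective map from \<open>e\<^sub>rAf\<close> onto \<open>\<pi>(L)\<close>.\<close>

lemma dim_image:
  assumes L: "left_ideal sA L" "L \<subseteq> Ir"
  shows "vector_space.dim sB (\<pi> ` L) * dim (UNIV :: 'a set) = dim Ir * dim L"
proof -
  obtain f where f: "f * f = f" "L = peirce 1 f" using left_ideal_eq_peirce[OF L(1)] by blast
  have peirce_sub: "peirce er f \<subseteq> L"
    using f(2) by (auto simp: peirce_def mult.assoc[symmetric])
  define \<phi> where "\<phi> x = \<pi> (x * er)" for x
  have \<phi>: "\<phi> x = \<pi> x" if "x \<in> L" for x using that L(2) mem_Ir_iff by (auto simp: \<phi>_def)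
  have "Vector_Spaces.linear sA sB \<phi>"
    unfolding linear_iff \<phi>_def
    using vector_space_axioms vector_space_B mult_mem_Ir[OF er_mem_Ir] \<pi>_add \<pi>_scale
    by (simp add: distrib_right scale_mult_left[symmetric])
  moreover have "inj_on \<phi> (span (peirce er f))"
  proof -
    have "inj_on \<pi> (peirce er f)"
      using \<pi>_eq_iff peirce_sub L(2) mem_peirce_iff[OF idempotent_er f(1)]
      by (intro inj_onI) (metis subsetD)
    then show ?thesis
      using \<phi> peirce_sub span_eq_iff[of "peirce er f"] subspace_peirce
      by (metis inj_on_cong subsetD)
  qed
  moreover have "\<pi> ` L = \<phi> ` peirce er f"
  proof -
    have "\<pi> ` L = \<pi> ` ((*) er ` L)"
      using \<pi>_er_mult L(2) by (force simp: image_image)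
    also have "(*) er ` L = peirce er f"
      using f(2) by (auto simp: peirce_def mult.assoc)
    finally show ?thesis using \<phi> peirce_sub by (auto intro!: image_cong)
  qed
  ultimately have "vector_space.dim sB (\<pi> ` L) = dim (peirce er f)"
    using finite_dimensional_vector_space_pair_1.dim_image_eq[of sA BsA sB]
      vector_space_B finite_dimensional_vector_space_axioms
    by (simp add: finite_dimensional_vector_space_pair_1_def)
  then show ?thesis using dim_peirce[OF idempotent_er f(1)] Ir_eq f(2) by simp
qed


lemma dim_image_eq_iff:
  fixes n k :: nat
  assumes dims: "dim (UNIV :: 'a set) = n * n" "dim Ir = n * k" and "0 < k"
    and L: "left_ideal sA L" "L \<subseteq> Ir"
  shows "vector_space.dim sB (\<pi> ` L) = m * k \<longleftrightarrow> dim L = n * m"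
proof -
  have "0 < n" using dim_UNIV_pos dims(1) by simp
  then have eq: "vector_space.dim sB (\<pi> ` L) * n = k * dim L"
    using dim_image[OF L] dims by (simp add: algebra_simps)
  have "vector_space.dim sB (\<pi> ` L) = m * k \<longleftrightarrow> vector_space.dim sB (\<pi> ` L) * n = m * k * n"
    using \<open>0 < n\<close> by simp
  also have "\<dots> \<longleftrightarrow> k * dim L = k * (n * m)"
    unfolding eq by (simp add: algebra_simps)
  finally show ?thesis using \<open>0 < k\<close> by simp
qed

lemma bij_betw_image_chains:
  fixes n k r :: nat and i :: "nat \<Rightarrow> nat"
  assumes dims: "dim (UNIV :: 'a set) = n * n" "dim Ir = n * k" and "0 < k" and "1 < r"
  shows "bij_betw (\<lambda>I. \<lambda>j\<in>{1..<r}. \<pi> ` I j)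
           {I \<in> {1..<r} \<rightarrow>\<^sub>E UNIV.
              (\<forall>j\<in>{1..<r}. left_ideal sA (I j) \<and> dim (I j) = n * i j) \<and>
              (\<forall>j. 1 \<le> j \<and> j + 1 < r \<longrightarrow> I j \<subseteq> I (j + 1)) \<and>
              I (r - 1) \<subseteq> Ir}
           {J \<in> {1..<r} \<rightarrow>\<^sub>E UNIV.
              (\<forall>j\<in>{1..<r}. left_ideal sB (J j) \<and> vector_space.dim sB (J j) = i j * k) \<and>
              (\<forall>j. 1 \<le> j \<and> j + 1 < r \<longrightarrow> J j \<subseteq> J (j + 1))}"
    (is "bij_betw ?F ?D ?C")
proof -
  have "bij_betw ?F
    {I \<in> {1..<r} \<rightarrow>\<^sub>E UNIV. (\<forall>j\<in>{1..<r}. I j \<in> {L. left_ideal sA L \<and> L \<subseteq> Ir} \<and>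
       dim (I j) = n * i j) \<and> (\<forall>j. 1 \<le> j \<and> j + 1 < r \<longrightarrow> I j \<subseteq> I (j + 1))}
    {J \<in> {1..<r} \<rightarrow>\<^sub>E UNIV. (\<forall>j\<in>{1..<r}. J j \<in> {J. left_ideal sB J} \<and>
       vector_space.dim sB (J j) = i j * k) \<and> (\<forall>j. 1 \<le> j \<and> j + 1 < r \<longrightarrow> J j \<subseteq> J (j + 1))}"
    (is "bij_betw ?F ?D' ?C'")
    using bij_betw_image_left_ideals image_subset_image_iff dim_image_eq_iff[OF dims \<open>0 < k\<close>]
    by (intro bij_betw_chains) auto
  moreover have "?D = ?D'"
  proof (intro set_eqI iffI)
    fix I assume "I \<in> ?D"
    then show "I \<in> ?D'" using chain_le_last[of r I Ir] by blast
  next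
    fix I assume "I \<in> ?D'"
    moreover have "r - 1 \<in> {1..<r}" using \<open>1 < r\<close> by simp
    ultimately show "I \<in> ?D" by blast
  qed
  moreover have "?C = ?C'" by simp
  ultimately show ?thesis by simp
qed

end

theorem mainTheorem8:
  fixes sA :: "'k::field \<Rightarrow> 'a::ring_1 \<Rightarrow> 'a"
    and sB :: "'k \<Rightarrow> 'b::ring_1 \<Rightarrow> 'b"
    and n r :: nat and i :: "nat \<Rightarrow> nat"
    and Ir :: "'a set" and \<pi> :: "'a \<Rightarrow> 'b"
  assumes csa: "central_simple_algebra sA n"
    and r: "r > 1"
    and i_mono: "strict_mono_on {1..r} i" and i_low: "1 \<le> i 1" and i_high: "i r \<le> n"
    and Ir: "left_ideal sA Ir" "vector_space.dim sA Ir = n * i r"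
    and B: "k_algebra sB"
    and \<pi>: "is_quotient_map sA sB Ir (prod_span sA (right_annihilator Ir) Ir) \<pi>"
  shows "(\<forall>Ij. left_ideal sA Ij \<and> Ij \<subseteq> Ir \<longrightarrow>
            {x \<in> Ij. \<pi> x = 0} = prod_span sA (right_annihilator Ir) Ij)
       \<and> bij_betw (\<lambda>I. \<lambda>j\<in>{1..<r}. \<pi> ` I j)
           {I \<in> {1..<r} \<rightarrow>\<^sub>E UNIV.
              (\<forall>j\<in>{1..<r}. left_ideal sA (I j) \<and> vector_space.dim sA (I j) = n * i j) \<and>
              (\<forall>j. 1 \<le> j \<and> j + 1 < r \<longrightarrow> I j \<subseteq> I (j + 1)) \<and>
              I (r - 1) \<subseteq> Ir}
           {J \<in> {1..<r} \<rightarrow>\<^sub>E UNIV.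
              (\<forall>j\<in>{1..<r}. left_ideal sB (J j) \<and> vector_space.dim sB (J j) = i j * i r) \<and>
              (\<forall>j. 1 \<le> j \<and> j + 1 < r \<longrightarrow> J j \<subseteq> J (j + 1))}"
proof -
  obtain Bs where "fd_simple_algebra sA Bs" using csa by (rule central_simple_algebra_fd_simple_algebra)
  then interpret A: fd_simple_algebra sA Bs .
  obtain er where er: "er * er = er" "Ir = peirce 1 er" using A.left_ideal_eq_peirce[OF Ir(1)] by blast
  have "vector_space sB" using B by (simp add: k_algebra_def)
  with er \<pi> interpret Q: left_ideal_quotient sA Bs sB Ir \<pi> er
    by (simp add: left_ideal_quotient_def left_ideal_quotient_axioms_def A.fd_simple_algebra_axioms)
  have dimA: "vector_space.dim sA (UNIV :: 'a set) = n * n"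
    using csa by (simp add: central_simple_algebra_def power2_eq_square)
  have "0 < i r" using strict_mono_onD[OF i_mono, of 1 r] r by simp
  show ?thesis (is "?kernel \<and> ?bij")
  proof
    show ?kernel using Q.kernel_restrict_left_ideal by blast
    show ?bij by (rule Q.bij_betw_image_chains[OF dimA Ir(2) \<open>0 < i r\<close> r])
  qed
qed

end
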